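(* Let $\mathcal L$ be an optionality-ignoring choice logic. Then for all $\mathcal L$-formulas $A,B$: $A\equiv^{s}_{\mathcal L}B$ if and only if $A\equiv^{\deg}_{\mathcal L}B$.
   Context: Fix a countably infinite set $\mathcal U$ of propositional variables. Let $\mathbb N=\{1,2,3,\dots\}$ and $\overline{\mathbb N}=\mathbb N\cup\{\infty\}$, with $n<\infty$ for all $n\in\mathbb N$. An interpretation is a set $\mathcal I\subseteq\mathcal U$ (the variables set to true). A choice logic $\mathcal L$ is specified by a finite set $C_{\mathcal L}$ of binary connective symbols disjoint from $\{\neg,\land,\lor\}$ and, for each $\circ\in C_{\mathcal L}$, a function $\mathrm{opt}_\circ:\mathbb N^2\to\mathbb N$ with $\mathrm{opt}_\circ(k,\ell)\le (k+1)(\ell+1)$ for all $k,\ell$, and a function $\deg_\circ:\mathbb N^2\times\overline{\mathbb N}^2\to\overline{\mathbb N}$ such that for all $k,\ell\in\mathbb N$, $m,n\in\overline{\mathbb N}$, either $\deg_\circ(k,\ell,m,n)\le \mathrm{opt}_\circ(k,\ell)$ or $\deg_\circ(k,\ell,m,n)=\infty$. The $\mathcal L$-formulas are built from variables in $\mathcal U$ using unary $\neg$ and binary $\land,\lor$ and the connectives in $C_{\mathcal L}$. The optionality $\mathrm{opt}_{\mathcal L}$ of formulas is defined by: $\mathrm{opt}_{\mathcal L}(a)=1$ for $a\in\mathcal U$; $\mathrm{opt}_{\mathcal L}(\neg F)=1$; $\mathrm{opt}_{\mathcal L}(F\land G)=\mathrm{opt}_{\mathcal L}(F\lor G)=\max(\mathrm{opt}_{\mathcal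 L}(F),\mathrm{opt}_{\mathcal L}(G))$; $\mathrm{opt}_{\mathcal L}(F\circ G)=\mathrm{opt}_\circ(\mathrm{opt}_{\mathcal L}(F),\mathrm{opt}_{\mathcal L}(G))$ for $\circ\in C_{\mathcal L}$. The satisfaction degree $\deg_{\mathcal L}(\mathcal I,F)\in\overline{\mathbb N}$ is defined by: $\deg_{\mathcal L}(\mathcal I,a)=1$ if $a\in\mathcal I$ and $\infty$ otherwise; $\deg_{\mathcal L}(\mathcal I,\neg F)=1$ if $\deg_{\mathcal L}(\mathcal I,F)=\infty$ and $\infty$ otherwise; $\deg_{\mathcal L}(\mathcal I,F\land G)=\max(\deg_{\mathcal L}(\mathcal I,F),\deg_{\mathcal L}(\mathcal I,G))$; $\deg_{\mathcal L}(\mathcal I,F\lor G)=\min(\deg_{\mathcal L}(\mathcal I,F),\deg_{\mathcal L}(\mathcal I,G))$; $\deg_{\mathcal L}(\mathcal I,F\circ G)=\deg_\circ(\mathrm{opt}_{\mathcal L}(F),\mathrm{opt}_{\mathcal L}(G),\deg_{\mathcal L}(\mathcal I,F),\deg_{\mathcal L}(\mathcal I,G))$ for $\circ\in C_{\mathcal L}$. An interpretation $\mathcal I$ is a preferred model of $F$, written $\mathcal I\in\mathrm{Pref}_{\mathcal L}(F)$, if $\deg_{\mathcal L}(\mathcal I,F)\ne\infty$ and $\deg_{\mathcal L}(\mathcal I,F)\le\deg_{\mathcal L}(\mathcal J,F)$ for all interpretations $\mathcal J$. $F[A/B]$ denotes the formula obtained from $F$ by replacing an occurrence of the subformula $A$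 by $B$ (and equals $F$ if $A$ does not occur in $F$). Two $\mathcal L$-formulas $A,B$ are degree-equivalent, $A\equiv^{\deg}_{\mathcal L}B$, if $\deg_{\mathcal L}(\mathcal I,A)=\deg_{\mathcal L}(\mathcal I,B)$ for all interpretations $\mathcal I$; they are strongly equivalent, $A\equiv^{s}_{\mathcal L}B$, if $\mathrm{Pref}_{\mathcal L}(F)=\mathrm{Pref}_{\mathcal L}(F[A/B])$ for all $\mathcal L$-formulas $F$. $\mathcal L$ is optionality-ignoring if for every $\circ\in C_{\mathcal L}$, every interpretation $\mathcal I$ and all $\mathcal L$-formulas $F,F',G,G'$ with $\deg_{\mathcal L}(\mathcal I,F)=\deg_{\mathcal L}(\mathcal I,F')$ and $\deg_{\mathcal L}(\mathcal I,G)=\deg_{\mathcal L}(\mathcal I,G')$ we have $\deg_{\mathcal L}(\mathcal I,F\circ G)=\deg_{\mathcal L}(\mathcal I,F'\circ G')$. *)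

theory Defs
  imports Main "HOL-Library.Extended_Nat"
begin

(* Connective symbols: elements of a type 'c; a logic fixes a finite set C of them. *)

datatype 'c form =
    Var nat
  | Neg "'c form"
  | Conj "'c form" "'c form"
  | Disj "'c form" "'c form"
  | Conn 'c "'c form" "'c form"

fun is_form :: "'c set \<Rightarrow> 'c form \<Rightarrow> bool" where
  "is_form C (Var a) = True"
| "is_form C (Neg F) = is_form C F"
| "is_form C (Conj F G) = (is_form C F \<and> is_form C G)"
| "is_form C (Disj F G) = (is_form C F \<and> is_form C G)"
| "is_form C (Conn c F G) = (c \<in> C \<and> is_form C F \<and> is_form C G)"

definition choice_logic ::
  "'c set \<Rightarrow> ('c \<Rightarrow> nat \<Rightarrow> nat \<Rightarrow> nat) \<Rightarrow> ('c \<Rightarrow> nat \<Rightarrow> nat \<Rightarrow> enat \<Rightarrow> enat \<Rightarrow> enat) \<Rightarrow> bool" where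
  "choice_logic C opt dg \<longleftrightarrow> finite C \<and>
     (\<forall>c\<in>C. \<forall>k l. k \<ge> 1 \<longrightarrow> l \<ge> 1 \<longrightarrow>
        1 \<le> opt c k l \<and> opt c k l \<le> (k + 1) * (l + 1) \<and>
        (\<forall>m n. m \<ge> 1 \<longrightarrow> n \<ge> 1 \<longrightarrow>
           1 \<le> dg c k l m n \<and>
           (dg c k l m n \<le> enat (opt c k l) \<or> dg c k l m n = \<infinity>)))"

fun optF :: "('c \<Rightarrow> nat \<Rightarrow> nat \<Rightarrow> nat) \<Rightarrow> 'c form \<Rightarrow> nat" where
  "optF opt (Var a) = 1"
| "optF opt (Neg F) = 1"
| "optF opt (Conj F G) = max (optF opt F) (optF opt G)"
| "optF opt (Disj F G) = max (optF opt F) (optF opt G)"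
| "optF opt (Conn c F G) = opt c (optF opt F) (optF opt G)"

fun degF :: "('c \<Rightarrow> nat \<Rightarrow> nat \<Rightarrow> nat) \<Rightarrow> ('c \<Rightarrow> nat \<Rightarrow> nat \<Rightarrow> enat \<Rightarrow> enat \<Rightarrow> enat)
              \<Rightarrow> nat set \<Rightarrow> 'c form \<Rightarrow> enat" where
  "degF opt dg I (Var a) = (if a \<in> I then 1 else \<infinity>)"
| "degF opt dg I (Neg F) = (if degF opt dg I F = \<infinity> then 1 else \<infinity>)"
| "degF opt dg I (Conj F G) = max (degF opt dg I F) (degF opt dg I G)"
| "degF opt dg I (Disj F G) = min (degF opt dg I F) (degF opt dg I G)"
| "degF opt dg I (Conn c F G) =
     dg c (optF opt F) (optF opt G) (degF opt dg I F) (degF opt dg I G)"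

definition Pref :: "('c \<Rightarrow> nat \<Rightarrow> nat \<Rightarrow> nat) \<Rightarrow> ('c \<Rightarrow> nat \<Rightarrow> nat \<Rightarrow> enat \<Rightarrow> enat \<Rightarrow> enat)
              \<Rightarrow> 'c form \<Rightarrow> nat set set" where
  "Pref opt dg F = {I. degF opt dg I F \<noteq> \<infinity> \<and> (\<forall>J. degF opt dg I F \<le> degF opt dg J F)}"

fun subforms :: "'c form \<Rightarrow> 'c form set" where
  "subforms (Var a) = {Var a}"
| "subforms (Neg F) = insert (Neg F) (subforms F)"
| "subforms (Conj F G) = insert (Conj F G) (subforms F \<union> subforms G)"
| "subforms (Disj F G) = insert (Disj F G) (subforms F \<union> subforms G)"
| "subforms (Conn c F G) = insert (Conn c F G) (subforms F \<union> subforms G)"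

inductive repl_occ :: "'c form \<Rightarrow> 'c form \<Rightarrow> 'c form \<Rightarrow> 'c form \<Rightarrow> bool" for A B where
  here: "repl_occ A B A B"
| neg: "repl_occ A B F F' \<Longrightarrow> repl_occ A B (Neg F) (Neg F')"
| conjL: "repl_occ A B F F' \<Longrightarrow> repl_occ A B (Conj F G) (Conj F' G)"
| conjR: "repl_occ A B G G' \<Longrightarrow> repl_occ A B (Conj F G) (Conj F G')"
| disjL: "repl_occ A B F F' \<Longrightarrow> repl_occ A B (Disj F G) (Disj F' G)"
| disjR: "repl_occ A B G G' \<Longrightarrow> repl_occ A B (Disj F G) (Disj F G')"
| connL: "repl_occ A B F F' \<Longrightarrow> repl_occ A B (Conn c F G) (Conn c F' G)"
| connR: "repl_occ A B G G' \<Longrightarrow> repl_occ A B (Conn c F G) (Conn c F G')"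

(* F' is (a) F[A/B]; F[A/B] = F when A does not occur in F *)
definition is_subst :: "'c form \<Rightarrow> 'c form \<Rightarrow> 'c form \<Rightarrow> 'c form \<Rightarrow> bool" where
  "is_subst A B F F' \<longleftrightarrow> repl_occ A B F F' \<or> (A \<notin> subforms F \<and> F' = F)"

definition strong_equiv :: "'c set \<Rightarrow> ('c \<Rightarrow> nat \<Rightarrow> nat \<Rightarrow> nat) \<Rightarrow> ('c \<Rightarrow> nat \<Rightarrow> nat \<Rightarrow> enat \<Rightarrow> enat \<Rightarrow> enat)
              \<Rightarrow> 'c form \<Rightarrow> 'c form \<Rightarrow> bool" where
  "strong_equiv C opt dg A B \<longleftrightarrow>
     (\<forall>F F'. is_form C F \<longrightarrow> is_subst A B F F' \<longrightarrow> Pref opt dg F = Pref opt dg F')"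

definition deg_equiv :: "('c \<Rightarrow> nat \<Rightarrow> nat \<Rightarrow> nat) \<Rightarrow> ('c \<Rightarrow> nat \<Rightarrow> nat \<Rightarrow> enat \<Rightarrow> enat \<Rightarrow> enat)
              \<Rightarrow> 'c form \<Rightarrow> 'c form \<Rightarrow> bool" where
  "deg_equiv opt dg A B \<longleftrightarrow> (\<forall>I. degF opt dg I A = degF opt dg I B)"

definition optionality_ignoring :: "'c set \<Rightarrow> ('c \<Rightarrow> nat \<Rightarrow> nat \<Rightarrow> nat) \<Rightarrow> ('c \<Rightarrow> nat \<Rightarrow> nat \<Rightarrow> enat \<Rightarrow> enat \<Rightarrow> enat) \<Rightarrow> bool" where
  "optionality_ignoring C opt dg \<longleftrightarrow>
     (\<forall>c\<in>C. \<forall>I F F' G G'. is_form C F \<longrightarrow> is_form C F' \<longrightarrow> is_form C G \<longrightarrow> is_form C G' \<longrightarrow>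
        degF opt dg I F = degF opt dg I F' \<longrightarrow> degF opt dg I G = degF opt dg I G' \<longrightarrow>
        degF opt dg I (Conn c F G) = degF opt dg I (Conn c F' G'))"

end

theory Submission
  imports Defs
begin

(* Replacing A by a degree-equivalent B changes no degree, because optionality-ignoring
   connectives only look at the degrees of their arguments; so Pref is unchanged.
   Conversely, if A and B differ in degree at I, pin all variables of A and B to their values
   in I, and use a fresh variable x to choose between A (x true) and B (x false).  Among the
   two resulting interpretations, exactly the one of smaller degree is preferred; after
   replacing A by B both have the same degree, so Pref changes. *)

fun vars :: "'c form \<Rightarrow> nat set" where
  "vars (Var a) = {a}"
| "vars (Neg F) = vars F"
| "vars (Conj F G) = vars F \<union> vars G"
| "vars (Disj F G) = vars F \<union> vars G"
| "vars (Conn c F G) = vars F \<union> vars G"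

lemma finite_vars: "finite (vars F)"
  by (induction F) auto

lemma degF_cong_vars:
  "(\<And>v. v \<in> vars F \<Longrightarrow> v \<in> I \<longleftrightarrow> v \<in> J) \<Longrightarrow> degF opt dg I F = degF opt dg J F"
  by (induction F) auto

lemma degF_ge_1:
  assumes "choice_logic C opt dg" and "is_form C F"
  shows "1 \<le> degF opt dg I F"
proof -
  have "1 \<le> degF opt dg I F \<and> 1 \<le> optF opt F"
    using assms(2)
  proof (induction F)
    case (Conn c F G)
    then show ?case using assms(1) unfolding choice_logic_def by auto
  qed (auto simp: max_def)
  then show ?thesis ..
qed

lemma repl_occ_degF_eq:
  assumes oi: "optionality_ignoring C opt dg" and de: "deg_equiv opt dg A B"
    and B: "is_form C B"
    and "repl_occ A B F F'" and "is_form C F"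
  shows "is_form C F' \<and> (\<forall>J. degF opt dg J F = degF opt dg J F')"
  using assms(4,5)
proof (induction rule: repl_occ.induct)
  case here
  then show ?case using de B by (simp add: deg_equiv_def)
next
  case (connL F F' c G)
  then have "c \<in> C" "is_form C F" "is_form C F'" "is_form C G"
    and "\<forall>J. degF opt dg J F = degF opt dg J F'" by auto
  moreover from this have "\<forall>J. degF opt dg J (Conn c F G) = degF opt dg J (Conn c F' G)"
    using oi unfolding optionality_ignoring_def by blast
  ultimately show ?case by simp
next
  case (connR G G' c F)
  then have "c \<in> C" "is_form C F" "is_form C G" "is_form C G'"
    and "\<forall>J. degF opt dg J G = degF opt dg J G'" by auto
  moreover from this have "\<forall>J. degF opt dg J (Conn c F G) = degF opt dg J (Conn c F G')"
    using oi unfolding optionality_ignoring_def by blast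
  ultimately show ?case by simp
qed auto

lemma deg_equiv_imp_strong_equiv:
  assumes "optionality_ignoring C opt dg" and "is_form C B" and "deg_equiv opt dg A B"
  shows "strong_equiv C opt dg A B"
  unfolding strong_equiv_def
proof (intro allI impI)
  fix F F'
  assume "is_form C F" and "is_subst A B F F'"
  then have "\<forall>J. degF opt dg J F = degF opt dg J F'"
    using repl_occ_degF_eq[OF assms(1,3,2)] unfolding is_subst_def by blast
  then show "Pref opt dg F = Pref opt dg F'"
    unfolding Pref_def by simp
qed

definition lit :: "nat set \<Rightarrow> nat \<Rightarrow> 'c form" where
  "lit I v = (if v \<in> I then Var v else Neg (Var v))"

fun guard :: "nat set \<Rightarrow> nat list \<Rightarrow> 'c form \<Rightarrow> 'c form" where
  "guard I [] G = G"
| "guard I (v # vs) G = Conj (lit I v) (guard I vs G)"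

definition ite_form :: "nat \<Rightarrow> 'c form \<Rightarrow> 'c form \<Rightarrow> 'c form" where
  "ite_form x A B = Disj (Conj A (Var x)) (Conj B (Neg (Var x)))"

lemma is_form_guard [simp]: "is_form C (guard I vs G) = is_form C G"
  by (induction vs) (auto simp: lit_def)

lemma is_form_ite_form [simp]: "is_form C (ite_form x A B) \<longleftrightarrow> is_form C A \<and> is_form C B"
  by (simp add: ite_form_def)

lemma repl_occ_guard: "repl_occ A B G G' \<Longrightarrow> repl_occ A B (guard I vs G) (guard I vs G')"
  by (induction vs) (auto intro: repl_occ.conjR)

lemma repl_occ_ite_form: "repl_occ A B (ite_form x A C) (ite_form x B C)"
  unfolding ite_form_def by (intro repl_occ.disjL repl_occ.conjL repl_occ.here)

lemma degF_lit: "degF opt dg J (lit I v) = (if v \<in> J \<longleftrightarrow> v \<in> I then 1 else \<infinity>)"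
  by (auto simp: lit_def)

lemma degF_guard:
  assumes "1 \<le> degF opt dg J G"
  shows "degF opt dg J (guard I vs G) =
    (if \<forall>v\<in>set vs. v \<in> J \<longleftrightarrow> v \<in> I then degF opt dg J G else \<infinity>)"
proof (induction vs)
  case (Cons v vs)
  have "max 1 (degF opt dg J G) = degF opt dg J G"
    using assms by (rule max_absorb2)
  then show ?case
    using Cons.IH by (simp add: degF_lit)
qed simp

lemma degF_ite_form:
  assumes "1 \<le> degF opt dg J A" and "1 \<le> degF opt dg J B"
  shows "degF opt dg J (ite_form x A B) = (if x \<in> J then degF opt dg J A else degF opt dg J B)"
  using assms by (auto simp: ite_form_def max_def min_def)

lemma degF_guard_ite_form:
  assumes "1 \<le> degF opt dg J A" and "1 \<le> degF opt dg J B"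
    and "vars A \<subseteq> set vs" and "vars B \<subseteq> set vs"
  shows "degF opt dg J (guard I vs (ite_form x A B)) =
    (if \<forall>v\<in>set vs. v \<in> J \<longleftrightarrow> v \<in> I
     then if x \<in> J then degF opt dg I A else degF opt dg I B else \<infinity>)"
proof -
  have "1 \<le> degF opt dg J (ite_form x A B)"
    using assms(1,2) by (simp add: degF_ite_form)
  then have "degF opt dg J (guard I vs (ite_form x A B)) =
      (if \<forall>v\<in>set vs. v \<in> J \<longleftrightarrow> v \<in> I
       then if x \<in> J then degF opt dg J A else degF opt dg J B else \<infinity>)"
    by (simp only: degF_guard degF_ite_form[OF assms(1,2)])
  moreover have "degF opt dg J A = degF opt dg I A" "degF opt dg J B = degF opt dg I B"
    if "\<forall>v\<in>set vs. v \<in> J \<longleftrightarrow> v \<in> I"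
    using that assms(3,4) by (auto intro: degF_cong_vars)
  ultimately show ?thesis
    by auto
qed

lemma Pref_separates:
  assumes "degF opt dg J F < degF opt dg J' F" and "\<And>K. degF opt dg J F \<le> degF opt dg K F"
  shows "J \<in> Pref opt dg F" and "J' \<notin> Pref opt dg F"
proof -
  have "degF opt dg J F \<noteq> \<infinity>"
    using assms(1) by (metis enat_ord_simps(6) not_less_iff_gr_or_eq)
  then show "J \<in> Pref opt dg F" and "J' \<notin> Pref opt dg F"
    using assms by (auto simp: Pref_def not_le)
qed

lemma Pref_differs:
  assumes "degF opt dg J F \<noteq> degF opt dg J' F"
    and "\<And>K. min (degF opt dg J F) (degF opt dg J' F) \<le> degF opt dg K F"
    and "degF opt dg J F' = degF opt dg J' F'"
  shows "Pref opt dg F \<noteq> Pref opt dg F'"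
proof
  assume Pref_eq: "Pref opt dg F = Pref opt dg F'"
  have same: "J \<in> Pref opt dg F \<longleftrightarrow> J' \<in> Pref opt dg F"
    unfolding Pref_eq using assms(3) by (simp add: Pref_def)
  from assms(1) consider
      "degF opt dg J F < degF opt dg J' F" | "degF opt dg J' F < degF opt dg J F"
    by fastforce
  then show False
  proof cases
    case 1
    then have "degF opt dg J F \<le> degF opt dg K F" for K
      using assms(2)[of K] by (simp add: min.absorb1)
    then show False
      using 1 Pref_separates[of opt dg J F J'] same by blast
  next
    case 2
    then have "degF opt dg J' F \<le> degF opt dg K F" for K
      using assms(2)[of K] by (simp add: min.absorb2)
    then show False
      using 2 Pref_separates[of opt dg J' F J] same by blast
  qed
qed

lemma strong_equiv_imp_deg_equiv:
  assumes cl: "choice_logic C opt dg" and A: "is_form C A" and B: "is_form C B"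
    and se: "strong_equiv C opt dg A B"
  shows "deg_equiv opt dg A B"
proof (rule ccontr)
  assume "\<not> deg_equiv opt dg A B"
  then obtain I where ne: "degF opt dg I A \<noteq> degF opt dg I B"
    unfolding deg_equiv_def by auto
  define V where "V = vars A \<union> vars B"
  have "finite V"
    unfolding V_def using finite_vars by blast
  then obtain vs x where vs: "set vs = V" and x: "x \<notin> V"
    using finite_list ex_new_if_finite[OF infinite_UNIV_nat] by metis
  let ?agree = "\<lambda>J. \<forall>v\<in>set vs. v \<in> J \<longleftrightarrow> v \<in> I"
  define F where "F = guard I vs (ite_form x A B)"
  define F' where "F' = guard I vs (ite_form x B B)"
  have "repl_occ A B F F'"
    unfolding F_def F'_def by (intro repl_occ_guard repl_occ_ite_form)
  then have Pref_eq: "Pref opt dg F = Pref opt dg F'"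
    using se A B unfolding strong_equiv_def is_subst_def F_def by simp
  have ge1: "\<And>J. 1 \<le> degF opt dg J A" "\<And>J. 1 \<le> degF opt dg J B"
    using degF_ge_1[OF cl] A B by auto
  have vars_vs: "vars A \<subseteq> set vs" "vars B \<subseteq> set vs"
    using vs by (auto simp: V_def)
  have degF: "degF opt dg J F =
      (if ?agree J then if x \<in> J then degF opt dg I A else degF opt dg I B else \<infinity>)" for J
    unfolding F_def using ge1 vars_vs by (rule degF_guard_ite_form)
  have degF': "degF opt dg J F' = (if ?agree J then degF opt dg I B else \<infinity>)" for J
    unfolding F'_def using degF_guard_ite_form[OF ge1(2) ge1(2) vars_vs(2) vars_vs(2)] by simp
  define J1 where "J1 = insert x I"
  define J0 where "J0 = I - {x}"
  have agree: "?agree J1" "?agree J0"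
    using x vs by (auto simp: J1_def J0_def)
  have "degF opt dg J1 F = degF opt dg I A" "degF opt dg J0 F = degF opt dg I B"
    using agree by (simp_all add: degF J1_def J0_def)
  moreover have "min (degF opt dg I A) (degF opt dg I B) \<le> degF opt dg K F" for K
    by (simp add: degF)
  moreover have "degF opt dg J1 F' = degF opt dg J0 F'"
    using agree by (simp add: degF')
  ultimately have "Pref opt dg F \<noteq> Pref opt dg F'"
    using ne Pref_differs[of opt dg J1 F J0 F'] by simp
  with Pref_eq show False by contradiction
qed

theorem mainTheorem7:
  fixes C :: "'c set" and opt :: "'c \<Rightarrow> nat \<Rightarrow> nat \<Rightarrow> nat"
    and dg :: "'c \<Rightarrow> nat \<Rightarrow> nat \<Rightarrow> enat \<Rightarrow> enat \<Rightarrow> enat"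
    and A B :: "'c form"
  assumes "choice_logic C opt dg"
    and "optionality_ignoring C opt dg"
    and "is_form C A" and "is_form C B"
  shows "strong_equiv C opt dg A B \<longleftrightarrow> deg_equiv opt dg A B"
  using assms deg_equiv_imp_strong_equiv strong_equiv_imp_deg_equiv by blast

end
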